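(* Let $N\ge2$ and $0=x_0<x_1<\dots<x_N=1$, $I=[0,1]$, $I_i=[x_{i-1},x_i]$, $|I_i|=x_i-x_{i-1}$, and for $i=1,\dots,N$ let $L_i(x)=x_{i-1}+|I_i|x$ (so $L_i(0)=x_{i-1}$, $L_i(1)=x_i$). Let $\alpha_i,\beta_i,\gamma_i$ be reals with $|\alpha_i|<1$, $|\beta_i|+|\gamma_i|<1$, let $p_i\in \mathrm{Lip}\,\lambda_i$ and $q_i\in\mathrm{Lip}\,\mu_i$ with $0<\lambda_i,\mu_i\le1$, and let $f_1,f_2:I\to\mathbb{R}$ be continuous functions satisfying, for all $x\in I$ and $i=1,\dots,N$, $$f_1(L_i(x))=\alpha_if_1(x)+\beta_if_2(x)+p_i(x),\qquad f_2(L_i(x))=\gamma_if_2(x)+q_i(x).$$ For indices $r_1,\dots,r_m\in\{1,\dots,N\}$ let $I_{r_1r_2\dots r_m}=L_{r_m}\circ L_{r_{m-1}}\circ\dots\circ L_{r_1}(I)$ (so $|I_{r_1\dots r_m}|=|I_{r_1}|\cdots|I_{r_m}|$), with the convention that the empty index gives $I$, and set $b_{r_1\dots r_m}=\int_{I_{r_1\dots r_m}}f_1(x)\,dx$, $a_{r_1\dots r_k}=\int_{I_{r_1\dots r_k}}f_2(x)\,dx$ (so $a$ with empty index is $\int_0^1 f_2$). Then $$b_{r_1r_2\dots r_m}=\sum_{k=1}^{m}\Big(\prod_{j=k+1}^{m}|I_{r_j}|\alpha_{r_j}\Big)|I_{r_k}|\Big(\int_{I_{r_1\dots r_{k-1}}}p_{r_k}(\xi)\,d\xi+\beta_{r_k}a_{r_1\dots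 r_{k-1}}\Big)+\prod_{j=1}^{m}\big(|I_{r_j}|\alpha_{r_j}\big)\int_0^1 f_1(\xi)\,d\xi .$$
   Context: $\mathrm{Lip}\,\lambda$ denotes the class of functions $g$ on $I$ with $|g(x)-g(y)|\le C|x-y|^{\lambda}$ for some constant $C$ and all $x,y\in I$. The functions $f_1,f_2$ arise as the components of the continuous function whose graph is the attractor of the IFS $\omega_i(x,y,z)=(L_i(x),\alpha_iy+\beta_iz+p_i(x),\gamma_iz+q_i(x))$ interpolating generalized data $(x_i,y_i,z_i)$; $f_1$ is the coalescence hidden variable fractal interpolation function. *)

theory Defs
  imports "HOL-Analysis.Analysis"
begin

definition ilen :: "(nat \<Rightarrow> real) \<Rightarrow> nat \<Rightarrow> real" where
  "ilen x i = x i - x (i - 1)"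

definition Lmap :: "(nat \<Rightarrow> real) \<Rightarrow> nat \<Rightarrow> real \<Rightarrow> real" where
  "Lmap x i t = x (i - 1) + ilen x i * t"

text \<open>For rs = [r_1,...,r_m], the composition L_(r_m) o ... o L_(r_1)
  (fold applies L_(r_1) first); the empty list gives the identity.\<close>
definition Lcomp :: "(nat \<Rightarrow> real) \<Rightarrow> nat list \<Rightarrow> real \<Rightarrow> real" where
  "Lcomp x rs = fold (Lmap x) rs"

definition Isub :: "(nat \<Rightarrow> real) \<Rightarrow> nat list \<Rightarrow> real set" where
  "Isub x rs = Lcomp x rs ` {0..1}"

definition Lip_on_I :: "real \<Rightarrow> (real \<Rightarrow> real) \<Rightarrow> bool" where
  "Lip_on_I lam g \<longleftrightarrow> (\<exists>C. \<forall>s\<in>{0..1}. \<forall>t\<in>{0..1}. \<bar>g s - g t\<bar> \<le> C * \<bar>s - t\<bar> powr lam)"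

end

theory Submission
  imports Defs
begin

text \<open>Integrating the functional equation for \<open>f\<^sub>1\<close> over \<open>I(rs)\<close> and substituting along the
  affine map \<open>L\<^sub>r\<close> gives the first-order recurrence
  \<open>b(rs @ [r]) = |I\<^sub>r| (\<alpha>\<^sub>r b(rs) + \<beta>\<^sub>r a(rs) + \<integral>\<^bsub>I(rs)\<^esub> p\<^sub>r)\<close>
  along the index word, and the stated formula is its closed-form solution.\<close>

lemma prod_nth_snoc:
  fixes f :: "'a \<Rightarrow> 'b::comm_monoid_mult"
  assumes "k \<le> length xs"
  shows "(\<Prod>j = k+1..Suc (length xs). f ((xs @ [y]) ! (j-1)))
         = f y * (\<Prod>j = k+1..length xs. f (xs ! (j-1)))"
proof -
  have "(\<Prod>j = k+1..length xs. f ((xs @ [y]) ! (j-1))) = (\<Prod>j = k+1..length xs. f (xs ! (j-1)))"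
    by (intro prod.cong) (auto simp: nth_append)
  then show ?thesis
    using assms by (simp add: prod.cl_ivl_Suc mult.commute)
qed

lemma snoc_recurrence_closed_form:
  fixes B :: "'a list \<Rightarrow> 'b::comm_semiring_1"
  assumes rec: "\<And>ys y. set (ys @ [y]) \<subseteq> A \<Longrightarrow> B (ys @ [y]) = u y * B ys + v ys y"
    and "set rs \<subseteq> A"
  shows "B rs = (\<Sum>k = 1..length rs.
                   (\<Prod>j = k+1..length rs. u (rs ! (j-1))) * v (take (k-1) rs) (rs ! (k-1)))
              + (\<Prod>j = 1..length rs. u (rs ! (j-1))) * B []"
  using \<open>set rs \<subseteq> A\<close>
proof (induction rs rule: rev_induct)
  case Nil
  then show ?case by simp
next
  case (snoc r rs)
  define m where "m = length rs"
  define T where "T = (\<lambda>ys k. (\<Prod>j = k+1..length ys. u (ys ! (j-1))) * v (take (k-1) ys) (ys ! (k-1)))"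
  have old_terms: "T (rs @ [r]) k = u r * T rs k" if "k \<in> {1..m}" for k
  proof -
    have "(rs @ [r]) ! (k-1) = rs ! (k-1)" "take (k-1) (rs @ [r]) = take (k-1) rs"
      using that by (auto simp: m_def nth_append)
    moreover have "k \<le> length rs"
      using that by (simp add: m_def)
    ultimately show ?thesis
      unfolding T_def length_append_singleton prod_nth_snoc[OF \<open>k \<le> length rs\<close>]
      by (simp add: mult.assoc)
  qed
  have new_term: "T (rs @ [r]) (Suc m) = v rs r"
    by (simp add: T_def m_def)
  define P where "P = (\<lambda>ys. \<Prod>j = 1..length ys. u (ys ! (j-1)))"
  have sum_snoc: "(\<Sum>k = 1..length (rs @ [r]). T (rs @ [r]) k) = u r * (\<Sum>k = 1..m. T rs k) + v rs r"
    by (simp add: m_def[symmetric] sum.cl_ivl_Suc old_terms new_term sum_distrib_left)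
  have prod_snoc: "P (rs @ [r]) = u r * P rs"
    using prod_nth_snoc[of 0 rs u r] unfolding P_def length_append_singleton by (simp only: add_0)
  have "B (rs @ [r]) = u r * B rs + v rs r"
    using rec[OF snoc.prems] .
  also have "\<dots> = u r * ((\<Sum>k = 1..m. T rs k) + P rs * B []) + v rs r"
    using snoc.IH snoc.prems by (simp add: T_def P_def m_def)
  also have "\<dots> = (\<Sum>k = 1..length (rs @ [r]). T (rs @ [r]) k) + P (rs @ [r]) * B []"
    unfolding sum_snoc prod_snoc by (simp add: algebra_simps)
  finally show ?case
    by (simp only: T_def P_def)
qed

lemma integral_affine_image:
  fixes g :: "real \<Rightarrow> real"
  assumes "0 < m" and "g integrable_on (\<lambda>t. c + m * t) ` {a..b}"
  shows "integral ((\<lambda>t. c + m * t) ` {a..b}) g = m * integral {a..b} (\<lambda>t. g (c + m * t))"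
proof (cases "a \<le> b")
  case True
  have image: "(\<lambda>t. c + m * t) ` {a..b} = {c + m * a..c + m * b}"
    using image_affinity_atLeastAtMost[of m c a b] True \<open>0 < m\<close> by (simp add: add.commute)
  have "(g has_integral integral (cbox (c + m * a) (c + m * b)) g) (cbox (c + m * a) (c + m * b))"
    using assms(2) by (simp add: image has_integral_integral)
  from has_integral_affinity'[OF this \<open>0 < m\<close>, of c]
  have "((\<lambda>t. g (c + m * t)) has_integral integral {c + m * a..c + m * b} g / m) {a..b}"
    using \<open>0 < m\<close> by (simp add: field_simps)
  then show ?thesis
    using \<open>0 < m\<close> by (simp add: image integral_unique)
qed simp

lemma Isub_Nil [simp]: "Isub x [] = {0..1}"
  by (simp add: Isub_def Lcomp_def)

lemma Isub_snoc: "Isub x (rs @ [r]) = Lmap x r ` Isub x rs"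
  by (simp add: Isub_def Lcomp_def image_image)

lemma Lmap_eq_affine: "Lmap x r = (\<lambda>t. x (r - 1) + ilen x r * t)"
  by (simp add: Lmap_def fun_eq_iff)

lemma Isub_is_interval: "\<exists>a b. Isub x rs = {a..b}"
proof (induction rs rule: rev_induct)
  case Nil
  then show ?case by auto
next
  case (snoc r rs)
  then obtain a b where "Isub x rs = {a..b}" by blast
  then show ?case
    using image_affinity_atLeastAtMost[of "ilen x r" "x (r - 1)" a b]
    by (auto simp: Isub_snoc Lmap_eq_affine add.commute)
qed

locale unit_interval_partition =
  fixes N :: nat and x :: "nat \<Rightarrow> real"
  assumes x0: "x 0 = 0" and xN: "x N = 1"
    and xmono: "\<And>i. i < N \<Longrightarrow> x i < x (Suc i)"
begin

lemma ilen_pos: "r \<in> {1..N} \<Longrightarrow> 0 < ilen x r"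
  using xmono[of "r - 1"] by (auto simp: ilen_def)

lemma node_in_unit:
  assumes "i \<le> N"
  shows "x i \<in> {0..1}"
proof -
  have step: "\<And>n. n \<in> {..<N} \<Longrightarrow> x n \<le> x (Suc n)"
    using xmono by (simp add: less_imp_le)
  have "x 0 \<le> x i" "x i \<le> x N"
    using assms by (auto intro!: lift_Suc_mono_le_ivl[of "{..<N}" x, OF step])
  then show ?thesis
    using x0 xN by simp
qed

lemma Lmap_in_unit:
  assumes "r \<in> {1..N}" and "t \<in> {0..1}"
  shows "Lmap x r t \<in> {0..1}"
proof -
  have "0 \<le> ilen x r * t" "ilen x r * t \<le> ilen x r"
    using ilen_pos[OF assms(1)] assms(2) by (simp_all add: mult_left_le)
  moreover have "x (r - 1) \<in> {0..1}" "x r \<in> {0..1}"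
    using assms(1) node_in_unit[of "r - 1"] node_in_unit[of r] by auto
  ultimately show ?thesis
    by (auto simp: Lmap_def ilen_def)
qed

lemma Isub_subset_unit: "set rs \<subseteq> {1..N} \<Longrightarrow> Isub x rs \<subseteq> {0..1}"
proof (induction rs rule: rev_induct)
  case (snoc r rs)
  then show ?case
    using Lmap_in_unit[of r] by (auto simp: Isub_snoc)
qed simp

lemma integrable_on_Isub:
  fixes g :: "real \<Rightarrow> real"
  assumes "continuous_on {0..1} g" and "set rs \<subseteq> {1..N}"
  shows "g integrable_on Isub x rs"
proof -
  obtain a b where ab: "Isub x rs = {a..b}"
    using Isub_is_interval by blast
  then have "{a..b} \<subseteq> {0..1}"
    using Isub_subset_unit[OF assms(2)] by simp
  then have "continuous_on {a..b} g"
    using continuous_on_subset[OF assms(1)] by blast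
  then show ?thesis
    unfolding ab by (rule integrable_continuous_real)
qed

lemma integral_Isub_snoc:
  fixes g :: "real \<Rightarrow> real"
  assumes "continuous_on {0..1} g" and "set rs \<subseteq> {1..N}" and "r \<in> {1..N}"
  shows "integral (Isub x (rs @ [r])) g = ilen x r * integral (Isub x rs) (\<lambda>t. g (Lmap x r t))"
proof -
  obtain a b where ab: "Isub x rs = {a..b}"
    using Isub_is_interval by blast
  have image: "Isub x (rs @ [r]) = (\<lambda>t. x (r - 1) + ilen x r * t) ` {a..b}"
    by (simp add: Isub_snoc ab Lmap_eq_affine)
  have "g integrable_on Isub x (rs @ [r])"
    using assms by (intro integrable_on_Isub) auto
  then have "integral (Isub x (rs @ [r])) g
             = ilen x r * integral {a..b} (\<lambda>t. g (x (r - 1) + ilen x r * t))"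
    unfolding image by (rule integral_affine_image[OF ilen_pos[OF assms(3)]])
  then show ?thesis
    by (simp add: ab Lmap_def)
qed

lemma integral_Isub_snoc_self_affine:
  fixes f g h :: "real \<Rightarrow> real"
  assumes f: "continuous_on {0..1} f" and g: "continuous_on {0..1} g"
    and eq: "\<And>t. t \<in> {0..1} \<Longrightarrow> f (Lmap x r t) = a * f t + b * g t + h t"
    and rs: "set rs \<subseteq> {1..N}" and r: "r \<in> {1..N}"
  shows "integral (Isub x (rs @ [r])) f
         = ilen x r * a * integral (Isub x rs) f
           + ilen x r * (integral (Isub x rs) h + b * integral (Isub x rs) g)"
proof -
  have "continuous_on {0..1} (\<lambda>t. f (Lmap x r t) - a * f t - b * g t)"
    using Lmap_in_unit[OF r] g unfolding Lmap_eq_affine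
    by (intro continuous_intros continuous_on_compose2[OF f]) auto
  \<comment> \<open>the equation itself forces \<open>h\<close> to be continuous\<close>
  then have h: "continuous_on {0..1} h"
    by (rule continuous_on_eq) (simp add: eq)
  have "integral (Isub x rs) (\<lambda>t. f (Lmap x r t))
        = integral (Isub x rs) (\<lambda>t. a * f t + b * g t + h t)"
    using Isub_subset_unit[OF rs] eq by (intro integral_cong) auto
  also have "\<dots> = a * integral (Isub x rs) f + b * integral (Isub x rs) g + integral (Isub x rs) h"
    using integrable_on_Isub[OF f rs] integrable_on_Isub[OF g rs] integrable_on_Isub[OF h rs]
    by (intro integral_unique has_integral_add has_integral_mult_right integrable_integral)
  finally show ?thesis
    using integral_Isub_snoc[OF f rs r] by (simp add: algebra_simps)
qed

end

theorem lemma3p1: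
  fixes N :: nat and x :: "nat \<Rightarrow> real"
    and \<alpha> \<beta> \<gamma> lam \<mu> :: "nat \<Rightarrow> real"
    and p q :: "nat \<Rightarrow> real \<Rightarrow> real"
    and f1 f2 :: "real \<Rightarrow> real"
    and rs :: "nat list"
  assumes N2: "N \<ge> 2"
    and x0: "x 0 = 0" and xN: "x N = 1"
    and xmono: "\<And>i. i < N \<Longrightarrow> x i < x (Suc i)"
    and alpha: "\<And>i. i \<in> {1..N} \<Longrightarrow> \<bar>\<alpha> i\<bar> < 1"
    and betagamma: "\<And>i. i \<in> {1..N} \<Longrightarrow> \<bar>\<beta> i\<bar> + \<bar>\<gamma> i\<bar> < 1"
    and lam: "\<And>i. i \<in> {1..N} \<Longrightarrow> 0 < lam i \<and> lam i \<le> 1"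
    and mu: "\<And>i. i \<in> {1..N} \<Longrightarrow> 0 < \<mu> i \<and> \<mu> i \<le> 1"
    and pLip: "\<And>i. i \<in> {1..N} \<Longrightarrow> Lip_on_I (lam i) (p i)"
    and qLip: "\<And>i. i \<in> {1..N} \<Longrightarrow> Lip_on_I (\<mu> i) (q i)"
    and f1c: "continuous_on {0..1} f1"
    and f2c: "continuous_on {0..1} f2"
    and eq1: "\<And>i t. i \<in> {1..N} \<Longrightarrow> t \<in> {0..1} \<Longrightarrow>
               f1 (Lmap x i t) = \<alpha> i * f1 t + \<beta> i * f2 t + p i t"
    and eq2: "\<And>i t. i \<in> {1..N} \<Longrightarrow> t \<in> {0..1} \<Longrightarrow>
               f2 (Lmap x i t) = \<gamma> i * f2 t + q i t"
    and rs: "set rs \<subseteq> {1..N}"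
  shows "integral (Isub x rs) f1 =
      (\<Sum>k = 1..length rs.
          (\<Prod>j = k+1..length rs. ilen x (rs ! (j-1)) * \<alpha> (rs ! (j-1)))
          * ilen x (rs ! (k-1))
          * (integral (Isub x (take (k-1) rs)) (p (rs ! (k-1)))
             + \<beta> (rs ! (k-1)) * integral (Isub x (take (k-1) rs)) f2))
      + (\<Prod>j = 1..length rs. ilen x (rs ! (j-1)) * \<alpha> (rs ! (j-1)))
        * integral {0..1} f1"
proof -
  interpret unit_interval_partition N x
    using x0 xN xmono by unfold_locales
  have "integral (Isub x (ys @ [y])) f1
        = ilen x y * \<alpha> y * integral (Isub x ys) f1
          + ilen x y * (integral (Isub x ys) (p y) + \<beta> y * integral (Isub x ys) f2)"
    if "set (ys @ [y]) \<subseteq> {1..N}" for ys y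
    using that eq1 by (intro integral_Isub_snoc_self_affine[OF f1c f2c]) auto
  from snoc_recurrence_closed_form[where B = "\<lambda>ys. integral (Isub x ys) f1"
      and u = "\<lambda>y. ilen x y * \<alpha> y"
      and v = "\<lambda>ys y. ilen x y * (integral (Isub x ys) (p y) + \<beta> y * integral (Isub x ys) f2)",
      OF this rs]
  show ?thesis
    by (simp add: mult.assoc)
qed

end
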